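(* Let $\mathcal{A}:\mathbb{R}^{n_1\times n_2}\to\mathbb{R}^m$ be linear, $y\in\mathbb{R}^m$, $R\ge1$, $\alpha,\beta>0$, and let $(u^1_{\alpha,\beta},\dots,u^R_{\alpha,\beta},v^1_{\alpha,\beta},\dots,v^R_{\alpha,\beta})$ be a global minimizer of $J^R_{\alpha,\beta}$. Let $\gamma>0$ and $r\in\{1,\dots,R\}$. If $v^r_{\alpha,\beta}\neq0$ and $\|v^r_{\alpha,\beta}\|_2\ge\|y\|_2^2/\gamma$, then $$\frac{\|v^r_{\alpha,\beta}\|_1}{\|v^r_{\alpha,\beta}\|_2}<\frac{\gamma}{\beta}.$$
   Context: For $y\in\mathbb{R}^m$ and $\alpha,\beta>0$, the functional $J^R_{\alpha,\beta}:(\mathbb{R}^{n_1})^R\times(\mathbb{R}^{n_2})^R\to\mathbb{R}$ is $$J^R_{\alpha,\beta}(u^1,\dots,u^R,v^1,\dots,v^R)=\Big\|y-\mathcal{A}\Big(\sum_{r=1}^Ru^r(v^r)^T\Big)\Big\|_2^2+\alpha\sum_{r=1}^R\|u^r\|_2^2+\beta\sum_{r=1}^R\|v^r\|_1.$$ *)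

theory Defs
  imports "HOL-Analysis.Analysis"
begin

text \<open>Matrices in R^(n1 x n2) are represented as real^'n2^'n1 (rows indexed by 'n1).\<close>

definition outer :: "real^'n1 \<Rightarrow> real^'n2 \<Rightarrow> real^'n2^'n1" where
  "outer u v = (\<chi> i j. u $ i * v $ j)"

definition l1norm :: "real^'n \<Rightarrow> real" where
  "l1norm v = (\<Sum>j\<in>UNIV. \<bar>v $ j\<bar>)"

text \<open>The functional J^R_{alpha,beta}; the R-tuples are functions on indices 1..R
  (values outside {1..R} are irrelevant).\<close>
definition J :: "(real^'n2^'n1 \<Rightarrow> real^'m) \<Rightarrow> real^'m \<Rightarrow> real \<Rightarrow> real \<Rightarrow> nat
    \<Rightarrow> (nat \<Rightarrow> real^'n1) \<Rightarrow> (nat \<Rightarrow> real^'n2) \<Rightarrow> real" where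
  "J A y \<alpha> \<beta> R u v =
     (norm (y - A (\<Sum>r=1..R. outer (u r) (v r))))\<^sup>2
     + \<alpha> * (\<Sum>r=1..R. (norm (u r))\<^sup>2)
     + \<beta> * (\<Sum>r=1..R. l1norm (v r))"

end

theory Submission
  imports Defs
begin

text \<open>Comparing a minimizer with the zero tuple gives \<open>J \<le> \<parallel>y\<parallel>\<^sup>2\<close>. The penalty
  \<open>\<beta>\<parallel>v\<^sup>r\<parallel>\<^sub>1\<close> is one summand of \<open>J\<close>, and it cannot reach \<open>\<parallel>y\<parallel>\<^sup>2\<close>: otherwise every other
  summand vanishes, so all \<open>u\<^sup>r = 0\<close>, the residual is \<open>\<parallel>y\<parallel>\<^sup>2\<close> and the penalty is forced
  to be \<open>0\<close>, contradicting \<open>v\<^sup>r \<noteq> 0\<close>. Hence \<open>\<beta>\<parallel>v\<^sup>r\<parallel>\<^sub>1 < \<parallel>y\<parallel>\<^sup>2 \<le> \<gamma>\<parallel>v\<^sup>r\<parallel>\<^sub>2\<close>.\<close>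

lemma l1norm_nonneg: "0 \<le> l1norm (v::real^'n)"
  unfolding l1norm_def by (simp add: sum_nonneg)

lemma l1norm_pos: "(v::real^'n) \<noteq> 0 \<Longrightarrow> 0 < l1norm v"
proof -
  assume "v \<noteq> 0"
  then have "0 < norm v" by simp
  also have "\<dots> \<le> l1norm v"
    unfolding l1norm_def by (rule norm_le_l1_cart)
  finally show ?thesis .
qed

lemma outer_zero_left [simp]: "outer 0 v = 0"
  unfolding outer_def by (simp add: vec_eq_iff)

lemma J_zero_left:
  assumes "linear A" and "\<forall>i\<in>{1..R}. u i = 0"
  shows "J A y \<alpha> \<beta> R u v = (norm y)\<^sup>2 + \<beta> * (\<Sum>i=1..R. l1norm (v i))"
proof -
  have "(\<Sum>i=1..R. outer (u i) (v i)) = 0"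
    using assms(2) by (intro sum.neutral) simp
  then show ?thesis
    unfolding J_def using linear_0[OF assms(1)] assms(2) by simp
qed

lemma J_zero: "linear A \<Longrightarrow> J A y \<alpha> \<beta> R (\<lambda>_. 0) (\<lambda>_. 0) = (norm y)\<^sup>2"
  by (simp add: J_zero_left l1norm_def)

lemma l1_penalty_below_norm_sq:
  assumes "linear A" and "\<alpha> > 0" and "\<beta> > 0"
    and "r \<in> {1..R}" and "v r \<noteq> 0"
    and J_le: "J A y \<alpha> \<beta> R u v \<le> (norm y)\<^sup>2"
  shows "\<beta> * l1norm (v r) < (norm y)\<^sup>2"
proof (rule ccontr)
  assume "\<not> ?thesis"
  then have penalty_ge: "(norm y)\<^sup>2 \<le> \<beta> * l1norm (v r)" by simp
  define S where "S = (\<Sum>i=1..R. l1norm (v i))"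
  define U where "U = (\<Sum>i=1..R. (norm (u i))\<^sup>2)"
  have "l1norm (v r) \<le> S"
    unfolding S_def using assms(4) by (intro member_le_sum) (auto simp: l1norm_nonneg)
  moreover have "0 \<le> U" "0 \<le> (norm (y - A (\<Sum>i=1..R. outer (u i) (v i))))\<^sup>2"
    unfolding U_def by (simp_all add: sum_nonneg)
  moreover have "J A y \<alpha> \<beta> R u v
      = (norm (y - A (\<Sum>i=1..R. outer (u i) (v i))))\<^sup>2 + \<alpha> * U + \<beta> * S"
    unfolding J_def U_def S_def ..
  ultimately have "\<alpha> * U \<le> 0"
    using J_le penalty_ge \<open>\<beta> > 0\<close> mult_left_mono[of "l1norm (v r)" S \<beta>] by linarith
  then have "U = 0"
    using \<open>0 \<le> U\<close> \<open>\<alpha> > 0\<close> by (simp add: mult_le_0_iff)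
  then have "\<forall>i\<in>{1..R}. u i = 0"
    unfolding U_def by (subst (asm) sum_nonneg_eq_0_iff) auto
  then have "J A y \<alpha> \<beta> R u v = (norm y)\<^sup>2 + \<beta> * S"
    unfolding S_def using J_zero_left[OF assms(1)] by blast
  moreover have "0 < \<beta> * S"
    using \<open>l1norm (v r) \<le> S\<close> l1norm_pos[OF assms(5)] \<open>\<beta> > 0\<close> by simp
  ultimately show False using J_le by simp
qed

theorem mainTheorem4:
  fixes A :: "real^'n2^'n1 \<Rightarrow> real^'m"
    and y :: "real^'m"
    and R r :: nat
    and \<alpha> \<beta> \<gamma> :: real
    and u :: "nat \<Rightarrow> real^'n1" and v :: "nat \<Rightarrow> real^'n2"
  assumes "linear A"
    and "R \<ge> 1"
    and "\<alpha> > 0" and "\<beta> > 0"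
    and "\<forall>u' v'. J A y \<alpha> \<beta> R u v \<le> J A y \<alpha> \<beta> R u' v'"
    and "\<gamma> > 0"
    and "r \<in> {1..R}"
    and "v r \<noteq> 0"
    and "norm (v r) \<ge> (norm y)\<^sup>2 / \<gamma>"
  shows "l1norm (v r) / norm (v r) < \<gamma> / \<beta>"
proof -
  have "J A y \<alpha> \<beta> R u v \<le> (norm y)\<^sup>2"
    using assms(5) J_zero[OF assms(1)] by metis
  then have "\<beta> * l1norm (v r) < (norm y)\<^sup>2"
    using l1_penalty_below_norm_sq assms(1,3,4,7,8) by blast
  also have "\<dots> \<le> \<gamma> * norm (v r)"
    using assms(6,9) by (simp add: field_simps)
  finally show ?thesis
    using assms(4,8) by (simp add: field_simps)
qed

end
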